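(* For integers $a,b\ge0$ and $1\le r\le a+b$, $D_{2r+1}\big(\zeta^{\mathfrak f}(\{2\}^a,3,\{2\}^b)\big)=\pi_{2r+1}\big(\alpha(\xi^r_{a,b})\big)\otimes\zeta^{\mathfrak f}(\{2\}^{a+b+1-r})$, where $\xi^r_{a,b}=\sum_{\substack{0\le\alpha'\le a,\ 0\le\beta\le b\\ \alpha'+\beta+1=r}}\zeta^{\mathfrak f}(\{2\}^{\alpha'},3,\{2\}^\beta)-\sum_{\substack{0\le\alpha'<a,\ 0\le\beta\le b\\ \alpha'+\beta+1=r}}\zeta^{\mathfrak f}(\{2\}^\beta,3,\{2\}^{\alpha'})+2\big(\mathbb 1(a\ge r)-\mathbb 1(b\ge r)\big)\sum_{i=1}^r(-1)^i\zeta^{\mathfrak f}(2i+1)\zeta^{\mathfrak f}(\{2\}^{r-i})$, and $\mathbb 1(P)$ is $1$ if $P$ holds and $0$ otherwise.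
   Context: Formal MZVs: $\mathcal X=\{x_0,x_1\}$, $\mathbb Q\langle\mathcal X\rangle$ free noncommutative polynomials (weight = number of letters), $ш$ shuffle product. $\mathcal Z^{\mathfrak f}=(\mathbb Q\langle\mathcal X\rangle,ш)/R$, $R$ the ideal generated by $x_0,x_1$ and $uш v-\iota(\iota^{-1}(u)*\iota^{-1}(v))$ for $u\in\mathbb Q\mathbf1+x_0\mathbb Q\langle\mathcal X\rangle x_1$, $v\in\mathbb Q\mathbf1+\mathbb Q\langle\mathcal X\rangle x_1$, with $\iota(y_{k_1}\cdots y_{k_d})=x_0^{k_1-1}x_1\cdots x_0^{k_d-1}x_1$ and $*$ the stuffle product ($y_iu*y_jv=y_i(u*y_jv)+y_j(y_iu*v)+y_{i+j}(u*v)$). $\zeta^{\mathfrak f}(k_1,\dots,k_d)$ is the class of $x_0^{k_1-1}x_1\cdots x_0^{k_d-1}x_1$; $\{2\}^m$ is $m$ entries $2$, $\zeta^{\mathfrak f}(\{2\}^0)=1$. $\mathcal A^{\mathfrak f}=\mathcal Z^{\mathfrak f}/(\zeta^{\mathfrak f}(2))$, $\alpha$ the projection; Goncharov coaction $\Delta_{\mathrm{Gon}}:\mathcal Z^{\mathfrak f}\to\mathcal A^{\mathfrak f}\otimes\mathcal Z^{\mathfrak f}$, $\zeta^{\mathfrak f}(w)\mapsto(\alpha\circ\zeta^{\mathfrak f}\otimes\zeta^{\mathfrak f})(\Delta_{\mathrm{Gon}}(w))$, where $\Delta_{\mathrm{Gon}}(\varepsilon_1\cdots\varepsilon_n)=\sum_k\sum_{0<i_1<\dots<i_k<n+1}\big(\mathop{ш}_{p=0}^kI(\varepsilon_{i_p};\varepsilon_{i_p+1}\cdots\varepsilon_{i_{p+1}-1};\varepsilon_{i_{p+1}})\big)\otimes\varepsilon_{i_1}\cdots\varepsilon_{i_k}$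 ($i_0=0,i_{k+1}=n+1,\varepsilon_0=x_1,\varepsilon_{n+1}=x_0$; $I(x_1;f;x_0)=f$, $I(x_0;f;x_1)=S(f)$, $S(\varepsilon_1\cdots\varepsilon_m)=(-1)^m\varepsilon_m\cdots\varepsilon_1$, $I(\varepsilon;f;\varepsilon)$ = coefficient of $\mathbf1$ in $f$ times $\mathbf1$). $\mathcal L^{\mathfrak f}=\mathcal A^{\mathfrak f}_{>0}/(\mathcal A^{\mathfrak f}_{>0})^2$, $\pi_{2r+1}:\mathcal A^{\mathfrak f}_{>0}\to\mathcal L^{\mathfrak f}_{2r+1}$ the projection, and $D_{2r+1}=(\pi_{2r+1}\otimes\mathrm{id})\circ(\Delta_{\mathrm{Gon}}-\mathbf1\otimes\mathrm{id}):\mathcal Z^{\mathfrak f}\to\mathcal L^{\mathfrak f}_{2r+1}\otimes\mathcal Z^{\mathfrak f}$. *)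

theory Defs
  imports Complex_Main
begin

datatype letter = X0 | X1

instance letter :: finite
proof
  have "(UNIV :: letter set) = {X0, X1}" using letter.exhaust by auto
  then show "finite (UNIV :: letter set)" by (metis finite.emptyI finite_insert)
qed

type_synonym word = "letter list"
(* an element of Q<X> is a finitely supported function word => rat *)
type_synonym poly = "word \<Rightarrow> rat"
(* an element of Q<X> (x) Q<X> is a finitely supported function on pairs of words *)
type_synonym tpoly = "word \<times> word \<Rightarrow> rat"

definition fsupp :: "('a \<Rightarrow> rat) \<Rightarrow> bool" where
  "fsupp p \<longleftrightarrow> finite {w. p w \<noteq> 0}"

definition dl :: "'a \<Rightarrow> ('a \<Rightarrow> rat)" where
  "dl u = (\<lambda>w. if w = u then 1 else 0)"

definition pre :: "'a \<Rightarrow> ('a list \<Rightarrow> rat) \<Rightarrow> ('a list \<Rightarrow> rat)" where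
  "pre a p = (\<lambda>w. case w of [] \<Rightarrow> 0 | c # w' \<Rightarrow> if c = a then p w' else 0)"

definition wcomp :: "nat \<Rightarrow> poly \<Rightarrow> poly" where
  "wcomp n p = (\<lambda>w. if length w = n then p w else 0)"

fun sh :: "word \<Rightarrow> word \<Rightarrow> poly" where
  "sh [] v = dl v"
| "sh u [] = dl u"
| "sh (a # u) (b # v) = (\<lambda>w. pre a (sh u (b # v)) w + pre b (sh (a # u) v) w)"

definition shmul :: "poly \<Rightarrow> poly \<Rightarrow> poly" where
  "shmul p q = (\<lambda>w. \<Sum>(u, v) \<in> {(u, v). length u + length v = length w}.
                      p u * q v * sh u v w)"

definition shprod_list :: "poly list \<Rightarrow> poly" where
  "shprod_list ps = foldr shmul ps (dl [])"

fun st :: "nat list \<Rightarrow> nat list \<Rightarrow> (nat list \<Rightarrow> rat)" where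
  "st [] v = dl v"
| "st u [] = dl u"
| "st (i # u) (j # v) =
     (\<lambda>m. pre i (st u (j # v)) m + pre j (st (i # u) v) m + pre (i + j) (st u v) m)"

definition pos :: "nat list \<Rightarrow> bool" where
  "pos k \<longleftrightarrow> (\<forall>x \<in> set k. 0 < x)"

definition stmul :: "(nat list \<Rightarrow> rat) \<Rightarrow> (nat list \<Rightarrow> rat) \<Rightarrow> (nat list \<Rightarrow> rat)" where
  "stmul P Q = (\<lambda>m. \<Sum>(k, l) \<in> {(k, l). sum_list k + sum_list l = sum_list m \<and> pos k \<and> pos l}.
                      P k * Q l * st k l m)"

(* iota(y_{k1}...y_{kd}) = x0^{k1-1} x1 ... x0^{kd-1} x1 ; also the word of zeta^f(k1,...,kd) *)
definition zw :: "nat list \<Rightarrow> word" where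
  "zw ks = concat (map (\<lambda>k. replicate (k - 1) X0 @ [X1]) ks)"

definition iota_poly :: "(nat list \<Rightarrow> rat) \<Rightarrow> poly" where
  "iota_poly S = (\<lambda>w. \<Sum>m \<in> {m. pos m \<and> zw m = w}. S m)"

definition iota_inv :: "poly \<Rightarrow> (nat list \<Rightarrow> rat)" where
  "iota_inv u = (\<lambda>k. if pos k then u (zw k) else 0)"

inductive_set qspan :: "('a \<Rightarrow> rat) set \<Rightarrow> ('a \<Rightarrow> rat) set" for S where
  zero: "(\<lambda>_. 0) \<in> qspan S"
| base: "f \<in> S \<Longrightarrow> f \<in> qspan S"
| add: "f \<in> qspan S \<Longrightarrow> g \<in> qspan S \<Longrightarrow> (\<lambda>x. f x + g x) \<in> qspan S"
| smul: "f \<in> qspan S \<Longrightarrow> (\<lambda>x. c * f x) \<in> qspan S"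

inductive_set shideal :: "poly set \<Rightarrow> poly set" for G where
  gen: "g \<in> G \<Longrightarrow> g \<in> shideal G"
| zero: "(\<lambda>_. 0) \<in> shideal G"
| add: "f \<in> shideal G \<Longrightarrow> g \<in> shideal G \<Longrightarrow> (\<lambda>x. f x + g x) \<in> shideal G"
| smul: "f \<in> shideal G \<Longrightarrow> (\<lambda>x. c * f x) \<in> shideal G"
| mult: "f \<in> shideal G \<Longrightarrow> fsupp q \<Longrightarrow> shmul q f \<in> shideal G"

definition Rgens :: "poly set" where
  "Rgens = {dl [X0], dl [X1]} \<union>
     {(\<lambda>w. shmul u v w - iota_poly (stmul (iota_inv u) (iota_inv v)) w) | u v.
        fsupp u \<and> fsupp v \<and>
        (\<forall>w. u w \<noteq> 0 \<longrightarrow> w = [] \<or> (\<exists>m. w = X0 # m @ [X1])) \<and>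
        (\<forall>w. v w \<noteq> 0 \<longrightarrow> w = [] \<or> (\<exists>m. w = m @ [X1]))}"

(* the ideal R:  Z^f = Q<X>/R *)
definition Rid :: "poly set" where
  "Rid = shideal Rgens"

(* kernel of Q<X> -> A^f = Z^f/(zeta^f(2)), zeta^f(2) = class of x0 x1 *)
definition RAid :: "poly set" where
  "RAid = shideal (Rgens \<union> {dl [X0, X1]})"

(* kernel of Q<X>_{>0} -> L^f = A_{>0}/(A_{>0})^2 *)
definition Lker :: "poly set" where
  "Lker = {(\<lambda>w. a w + s w) | a s. a \<in> RAid \<and>
            s \<in> qspan {shmul p q | p q. fsupp p \<and> fsupp q \<and> p [] = 0 \<and> q [] = 0}}"

(* kernel of  p |-> pi_{2r+1}(alpha(zeta^f(p)))  (pi_n = projection to the weight-n component) *)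
definition piker :: "nat \<Rightarrow> poly set" where
  "piker n = {p. fsupp p \<and> wcomp n p \<in> Lker}"

definition tens :: "poly \<Rightarrow> poly \<Rightarrow> tpoly" where
  "tens p q = (\<lambda>(u, v). p u * q v)"

(* kernel of  Q<X> (x) Q<X> -> L^f_n (x) Z^f *)
definition tker :: "nat \<Rightarrow> tpoly set" where
  "tker n = qspan ({tens p q | p q. p \<in> piker n \<and> fsupp q} \<union>
                   {tens p q | p q. fsupp p \<and> q \<in> Rid})"

(* equality in L^f_n (x) Z^f of the classes of two lifts *)
definition eqLZ :: "nat \<Rightarrow> tpoly \<Rightarrow> tpoly \<Rightarrow> bool" where
  "eqLZ n P Q \<longleftrightarrow> (\<lambda>x. P x - Q x) \<in> tker n"

definition Iseg :: "letter \<Rightarrow> word \<Rightarrow> letter \<Rightarrow> poly" where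
  "Iseg a f b =
    (if a = X1 \<and> b = X0 then dl f
     else if a = X0 \<and> b = X1 then (\<lambda>w. (-1) ^ length f * dl (rev f) w)
     else if f = [] then dl [] else (\<lambda>_. 0))"

definition gon_left :: "word \<Rightarrow> nat set \<Rightarrow> poly" where
  "gon_left w T =
    (let e = X1 # w @ [X0]; ks = sorted_list_of_set T; bs = 0 # ks @ [length w + 1]
     in shprod_list (map (\<lambda>(i, j). Iseg (e ! i) (take (j - i - 1) (drop (i + 1) e)) (e ! j))
                        (zip bs (tl bs))))"

definition gon_right :: "word \<Rightarrow> nat set \<Rightarrow> word" where
  "gon_right w T = map (\<lambda>i. (X1 # w @ [X0]) ! i) (sorted_list_of_set T)"

(* Delta_Gon(w) as an element of Q<X> (x) Q<X> *)
definition gon :: "word \<Rightarrow> tpoly" where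
  "gon w = (\<lambda>(u, v). \<Sum>T \<in> Pow {1..length w}.
              gon_left w T u * (if v = gon_right w T then 1 else 0))"

(* lift of (Delta_Gon - 1 (x) id)(w); D_{2r+1} is obtained by projecting with pi_{2r+1}, see eqLZ *)
definition gon_red :: "word \<Rightarrow> tpoly" where
  "gon_red w = (\<lambda>x. gon w x - tens (dl []) (dl w) x)"

definition twos :: "nat \<Rightarrow> nat list" where
  "twos m = replicate m 2"

definition xi :: "nat \<Rightarrow> nat \<Rightarrow> nat \<Rightarrow> poly" where
  "xi a b r = (\<lambda>w.
      (\<Sum>(al, be) \<in> {(al, be). al \<le> a \<and> be \<le> b \<and> al + be + 1 = r}.
          dl (zw (twos al @ [3] @ twos be)) w)
    - (\<Sum>(al, be) \<in> {(al, be). al < a \<and> be \<le> b \<and> al + be + 1 = r}.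
          dl (zw (twos be @ [3] @ twos al)) w)
    + 2 * ((if a \<ge> r then 1 else 0) - (if b \<ge> r then 1 else 0)) *
        (\<Sum>i = 1..r. (-1) ^ i * shmul (dl (zw [2 * i + 1])) (dl (zw (twos (r - i)))) w))"

end

theory Submission
  imports Defs
begin

text \<open>
  \<open>\<Delta>\<^sub>G\<^sub>o\<^sub>n(w)\<close> is a sum over the sets \<open>T\<close> of inner positions at which the framed word
  \<open>x\<^sub>1 w x\<^sub>0\<close> is cut; its left factor is the shuffle product of the \<open>I\<close>-terms of the segments
  between consecutive cut points. In \<open>L\<close>, products of two factors of positive weight vanish, so
  only the cuts leaving out a single block of \<open>2r + 1\<close> consecutive letters contribute to
  \<open>D\<^bsub>2r+1\<^esub>\<close>; for \<open>w = \<zeta>({2}\<^sup>a,3,{2}\<^sup>b)\<close> the right factor of such a cut is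
  \<open>\<zeta>({2}\<^bsup>a+b+1-r\<^esup>)\<close> whenever its left factor does not vanish.

  The framed word alternates \<open>x\<^sub>1x\<^sub>0\<close> except for one doubled \<open>x\<^sub>0\<close> at the \<open>3\<close>, so a block
  term vanishes unless its two end letters differ. Blocks starting at even positions give
  \<open>\<zeta>({2}\<^sup>\<alpha>,3,{2}\<^sup>\<beta>)\<close>, blocks starting at odd positions give \<open>-\<zeta>({2}\<^sup>\<beta>,3,{2}\<^sup>\<alpha>)\<close>
  (through the reversal in \<open>I(x\<^sub>0;f;x\<^sub>1)\<close>), and the two blocks starting right at the \<open>3\<close> give
  \<open>\<plusminus>\<zeta>({2}\<^sup>r)x\<^sub>0\<close>. This divergent word is regularized: as \<open>x\<^sub>0 \<in> R\<close>, the shuffle product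
  of \<open>\<zeta>({2}\<^sup>r)\<close> and \<open>x\<^sub>0\<close> lies in \<open>R\<close>, which expresses \<open>\<zeta>({2}\<^sup>r)x\<^sub>0\<close> through
  \<open>\<Sum>\<^sub>\<alpha> \<zeta>({2}\<^sup>\<alpha>,3,{2}\<^bsup>r-1-\<alpha>\<^esup>)\<close>, and the stuffle relations for \<open>\<zeta>(2i+1)\<zeta>({2}\<^sup>m)\<close>
  telescope this sum into \<open>\<Sum>\<^sub>i (-1)\<^sup>i \<zeta>(2i+1) \<zeta>({2}\<^bsup>r-i\<^esup>)\<close>.
\<close>

lemma zw_Nil [simp]: "zw [] = []"
  by (simp add: zw_def)

lemma zw_Cons: "zw (k # ks) = replicate (k - 1) X0 @ [X1] @ zw ks"
  by (simp add: zw_def)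

lemma zw_append: "zw (ks @ ls) = zw ks @ zw ls"
  by (simp add: zw_def)

lemma twos_0 [simp]: "twos 0 = []"
  by (simp add: twos_def)

lemma twos_Suc: "twos (Suc m) = 2 # twos m"
  by (simp add: twos_def)

lemma twos_Suc_snoc: "twos (Suc m) = twos m @ [2]"
  by (simp add: twos_def replicate_append_same)

lemma pos_twos: "pos (twos m)"
  by (simp add: pos_def twos_def)

lemma zw_twos_Suc: "zw (twos (Suc m)) = X0 # X1 # zw (twos m)"
  by (simp add: twos_Suc zw_Cons)

definition alternating_letter :: "nat \<Rightarrow> letter" where
  "alternating_letter k = (if odd k then X1 else X0)"

lemma zw_twos_eq_map: "zw (twos m) = map alternating_letter [0..<2 * m]"
proof (induction m)
  case (Suc m)
  have "[0..<2 * Suc m] = [0..<2 * m] @ [2 * m, 2 * m + 1]"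
    by simp
  then show ?case
    using Suc by (simp add: twos_Suc_snoc zw_append zw_Cons alternating_letter_def)
qed simp

lemma length_zw_twos [simp]: "length (zw (twos m)) = 2 * m"
  by (simp add: zw_twos_eq_map)

text \<open>The letter at position \<open>k\<close> of \<open>x\<^sub>0x\<^sub>1x\<^sub>0x\<^sub>1\<dots>\<close>, with the parity
  reversed after position \<open>c\<close>: both \<open>\<zeta>({2}\<^sup>\<alpha>,3,{2}\<^sup>\<beta>)\<close> and \<open>\<zeta>({2}\<^sup>r)x\<^sub>0\<close> are
  words of this shape.\<close>

definition flipped_letter :: "nat \<Rightarrow> nat \<Rightarrow> letter" where
  "flipped_letter c k = (if (k \<le> c) = odd k then X1 else X0)"

lemma if_letter_eq_iff: "((if A then X1 else X0) = (if B then X1 else X0)) \<longleftrightarrow> (A \<longleftrightarrow> B)"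
  by auto

definition word_23 :: "nat \<Rightarrow> nat \<Rightarrow> word" where
  "word_23 \<alpha> \<beta> = zw (twos \<alpha> @ [3] @ twos \<beta>)"

definition word_2_x0 :: "nat \<Rightarrow> word" where
  "word_2_x0 r = zw (twos r) @ [X0]"

lemma word_23_eq_map: "word_23 \<alpha> \<beta> = map (flipped_letter (2 * \<alpha>)) [0..<2 * \<alpha> + 2 * \<beta> + 3]"
proof (rule nth_equalityI)
  have w: "word_23 \<alpha> \<beta> = map alternating_letter [0..<2 * \<alpha>] @ [X0, X0, X1] @
                           map alternating_letter [0..<2 * \<beta>]"
    by (simp add: word_23_def zw_append zw_Cons zw_twos_eq_map numeral_3_eq_3)
  then show "length (word_23 \<alpha> \<beta>) = length (map (flipped_letter (2 * \<alpha>)) [0..<2 * \<alpha> + 2 * \<beta> + 3])"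
    by simp
  fix k assume "k < length (word_23 \<alpha> \<beta>)"
  then have "k < 2 * \<alpha> + 2 * \<beta> + 3"
    by (simp add: w)
  then show "word_23 \<alpha> \<beta> ! k = map (flipped_letter (2 * \<alpha>)) [0..<2 * \<alpha> + 2 * \<beta> + 3] ! k"
    unfolding w
    by (auto simp: nth_append alternating_letter_def flipped_letter_def nth_Cons' split: if_splits;
        presburger)
qed

lemma length_word_23: "length (word_23 \<alpha> \<beta>) = 2 * \<alpha> + 2 * \<beta> + 3"
  by (simp add: word_23_eq_map)

lemma word_2_x0_eq_map: "word_2_x0 r = map (flipped_letter (2 * r)) [0..<2 * r + 1]"
  by (rule nth_equalityI)
     (auto simp: word_2_x0_def zw_twos_eq_map nth_append alternating_letter_def flipped_letter_def)

lemma word_23_0: "word_23 0 \<beta> = X0 # X0 # X1 # zw (twos \<beta>)"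
  by (simp add: word_23_def zw_Cons numeral_3_eq_3)

lemma word_23_Suc: "word_23 (Suc \<alpha>) \<beta> = X0 # X1 # word_23 \<alpha> \<beta>"
  by (simp add: word_23_def twos_Suc zw_Cons)

lemma word_2_x0_0: "word_2_x0 0 = [X0]"
  by (simp add: word_2_x0_def)

lemma word_2_x0_Suc: "word_2_x0 (Suc r) = X0 # X1 # word_2_x0 r"
  by (simp add: word_2_x0_def zw_twos_Suc)

lemma pre_Nil [simp]: "pre a p [] = 0"
  by (simp add: pre_def)

lemma pre_Cons [simp]: "pre a p (c # w) = (if c = a then p w else 0)"
  by (simp add: pre_def)

lemma dl_eq_0_iff [simp]: "dl u x = 0 \<longleftrightarrow> x \<noteq> u"
  by (simp add: dl_def)

lemma dl_self [simp]: "dl u u = 1"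
  by (simp add: dl_def)

lemma dl_Cons_Cons: "dl (c # u) (d # v) = (if c = d then dl u v else 0)"
  by (simp add: dl_def)

lemma dl_Cons_Nil: "dl (c # u) [] = 0"
  by (simp add: dl_def)

lemma sum_eq_single:
  assumes "finite S" "x \<in> S" "\<And>y. y \<in> S \<Longrightarrow> y \<noteq> x \<Longrightarrow> f y = 0"
  shows "sum f S = f x"
  using sum.mono_neutral_left[of S "{x}" f] assms by auto

lemma sum_nonzero_imp_ex: "sum f S \<noteq> (0::'a::comm_monoid_add) \<Longrightarrow> \<exists>x\<in>S. f x \<noteq> 0"
  by (meson sum.neutral)

definition homogeneous :: "nat \<Rightarrow> ('a list \<Rightarrow> rat) \<Rightarrow> bool" where
  "homogeneous d p \<longleftrightarrow> (\<forall>w. p w \<noteq> 0 \<longrightarrow> length w = d)"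

lemma finite_words_length_le: "finite {w :: word. length w \<le> d}"
  using finite_lists_length_le[of "UNIV :: letter set" d] by simp

lemma homogeneous_fsupp: "homogeneous d (p :: poly) \<Longrightarrow> fsupp p"
  unfolding fsupp_def homogeneous_def
  by (rule finite_subset[OF _ finite_words_length_le[of d]]) auto

lemma homogeneous_dl: "homogeneous (length u) (dl u)"
  by (simp add: homogeneous_def)

lemma homogeneous_diff: "homogeneous d p \<Longrightarrow> homogeneous d q \<Longrightarrow> homogeneous d (\<lambda>w. p w - q w)"
  unfolding homogeneous_def by (metis diff_0 diff_zero minus_zero)

lemma homogeneous_smul: "homogeneous d p \<Longrightarrow> homogeneous d (\<lambda>w. c * p w)"
  by (auto simp: homogeneous_def)

lemma homogeneous_sum:
  "(\<And>i. i \<in> A \<Longrightarrow> homogeneous d (f i)) \<Longrightarrow> homogeneous d (\<lambda>w. \<Sum>i\<in>A. f i w)"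
  unfolding homogeneous_def by (auto dest!: sum_nonzero_imp_ex)

lemma homogeneous_Nil: "homogeneous d p \<Longrightarrow> 0 < d \<Longrightarrow> p [] = 0"
  by (auto simp: homogeneous_def)

lemma wcomp_homogeneous: "homogeneous n p \<Longrightarrow> wcomp n p = p"
  by (auto simp: homogeneous_def wcomp_def fun_eq_iff)

lemma wcomp_homogeneous_other: "homogeneous d p \<Longrightarrow> d \<noteq> n \<Longrightarrow> wcomp n p = (\<lambda>_. 0)"
  by (auto simp: homogeneous_def wcomp_def fun_eq_iff)

lemma length_sh: "sh u v w \<noteq> 0 \<Longrightarrow> length w = length u + length v"
proof (induction u v arbitrary: w rule: sh.induct)
  case (3 a u b v)
  then obtain c w' where w: "w = c # w'"
    by (cases w) auto
  with "3.prems" have "sh u (b # v) w' \<noteq> 0 \<or> sh (a # u) v w' \<noteq> 0"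
    by (auto split: if_split_asm)
  then show ?case
    using "3.IH" w by fastforce
qed (auto simp: dl_def split: if_split_asm)

lemma sh_Nil_right [simp]: "sh u [] = dl u"
  by (cases u) auto

lemma finite_word_pairs: "finite {(u :: word, v :: word). length u + length v = n}"
  by (rule finite_subset[of _ "{u. length u \<le> n} \<times> {v. length v \<le> n}"])
     (auto intro: finite_words_length_le)

lemma shmul_dl: "shmul (dl u) (dl v) = sh u v"
proof
  fix w
  show "shmul (dl u) (dl v) w = sh u v w"
  proof (cases "length u + length v = length w")
    case True
    then show ?thesis
      unfolding shmul_def by (subst sum_eq_single[where x = "(u, v)"]) (auto simp: finite_word_pairs)
  next
    case False
    then have "sh u v w = 0"
      using length_sh by metis
    moreover have "shmul (dl u) (dl v) w = 0"
      unfolding shmul_def using False by (intro sum.neutral) (auto simp: dl_def)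
    ultimately show ?thesis
      by simp
  qed
qed

lemma shmul_one_left [simp]: "shmul (dl []) q = q"
  unfolding shmul_def
  by (rule ext, subst sum_eq_single[where x = "([], _)"]) (auto simp: finite_word_pairs)

lemma shmul_one_right [simp]: "shmul p (dl []) = p"
  unfolding shmul_def
  by (rule ext, subst sum_eq_single[where x = "(_, [])"]) (auto simp: finite_word_pairs)

lemma homogeneous_shmul:
  assumes "homogeneous d p" "homogeneous e q"
  shows "homogeneous (d + e) (shmul p q)"
  unfolding homogeneous_def
proof (intro allI impI)
  fix w assume "shmul p q w \<noteq> 0"
  then obtain u v where "p u * q v * sh u v w \<noteq> 0"
    unfolding shmul_def by (auto dest!: sum_nonzero_imp_ex)
  then show "length w = d + e"
    using assms length_sh[of u v w] by (auto simp: homogeneous_def)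
qed

lemma Rid_add: "f \<in> Rid \<Longrightarrow> g \<in> Rid \<Longrightarrow> (\<lambda>x. f x + g x) \<in> Rid"
  unfolding Rid_def by (rule shideal.add)

lemma Rid_smul: "f \<in> Rid \<Longrightarrow> (\<lambda>x. c * f x) \<in> Rid"
  unfolding Rid_def by (rule shideal.smul)

lemma Rid_diff: "f \<in> Rid \<Longrightarrow> g \<in> Rid \<Longrightarrow> (\<lambda>x. f x - g x) \<in> Rid"
  using Rid_add[of f "\<lambda>x. (-1) * g x"] Rid_smul[of g "-1"] by simp

lemma shideal_mono: "f \<in> shideal G \<Longrightarrow> G \<subseteq> G' \<Longrightarrow> f \<in> shideal G'"
  by (induction rule: shideal.induct) (auto intro: shideal.intros)

lemma Rid_subset_RAid: "Rid \<subseteq> RAid"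
  unfolding Rid_def RAid_def by (auto elim: shideal_mono)

lemma shmul_minus_stuffle_in_Rid:
  assumes "fsupp u" "fsupp v"
    "\<forall>w. u w \<noteq> 0 \<longrightarrow> w = [] \<or> (\<exists>m. w = X0 # m @ [X1])"
    "\<forall>w. v w \<noteq> 0 \<longrightarrow> w = [] \<or> (\<exists>m. w = m @ [X1])"
  shows "(\<lambda>w. shmul u v w - iota_poly (stmul (iota_inv u) (iota_inv v)) w) \<in> Rid"
  unfolding Rid_def by (rule shideal.gen) (use assms in \<open>auto simp: Rgens_def\<close>)

definition positive_products :: "poly set" where
  "positive_products = {shmul p q | p q. fsupp p \<and> fsupp q \<and> p [] = 0 \<and> q [] = 0}"

lemma Lker_intro: "a \<in> RAid \<Longrightarrow> s \<in> qspan positive_products \<Longrightarrow> (\<lambda>w. a w + s w) \<in> Lker"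
  unfolding Lker_def positive_products_def by blast

lemma zero_in_RAid: "(\<lambda>_. 0) \<in> RAid"
  unfolding RAid_def by (rule shideal.zero)

lemma qspan_positive_products_subset_Lker: "qspan positive_products \<subseteq> Lker"
  using Lker_intro[OF zero_in_RAid] by fastforce

lemma RAid_subset_Lker: "RAid \<subseteq> Lker"
  using Lker_intro[OF _ qspan.zero] by fastforce

lemma piker_homogeneous_other: "homogeneous d p \<Longrightarrow> d \<noteq> n \<Longrightarrow> p \<in> piker n"
  unfolding piker_def
  using homogeneous_fsupp wcomp_homogeneous_other qspan.zero qspan_positive_products_subset_Lker by fastforce

lemma piker_homogeneous_positive_products: "homogeneous d p \<Longrightarrow> p \<in> qspan positive_products \<Longrightarrow> p \<in> piker n"
  using piker_homogeneous_other[of d p n] qspan_positive_products_subset_Lker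
  by (cases "d = n") (auto simp: piker_def homogeneous_fsupp wcomp_homogeneous)

lemma piker_homogeneous_Rid: "homogeneous d p \<Longrightarrow> p \<in> Rid \<Longrightarrow> p \<in> piker n"
  using piker_homogeneous_other[of d p n] Rid_subset_RAid RAid_subset_Lker
  by (cases "d = n") (auto simp: piker_def homogeneous_fsupp wcomp_homogeneous)

lemma tens_in_tker: "p \<in> piker n \<Longrightarrow> fsupp q \<Longrightarrow> tens p q \<in> tker n"
  unfolding tker_def by (rule qspan.base) blast

lemma tker_add: "P \<in> tker n \<Longrightarrow> Q \<in> tker n \<Longrightarrow> (\<lambda>x. P x + Q x) \<in> tker n"
  unfolding tker_def by (rule qspan.add)

lemma tker_sum:
  "finite A \<Longrightarrow> (\<And>i. i \<in> A \<Longrightarrow> f i \<in> tker n) \<Longrightarrow> (\<lambda>x. \<Sum>i\<in>A. f i x) \<in> tker n"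
proof (induction A rule: finite_induct)
  case empty
  then show ?case by (simp add: tker_def qspan.zero)
next
  case (insert a A)
  then show ?case using tker_add[of "f a" n] by simp
qed

section \<open>Regularization and the stuffle relations\<close>

lemma sh_zw_twos_x0:
  "sh (zw (twos k)) [X0] = (\<lambda>x. dl (word_2_x0 k) x + 2 * (\<Sum>\<alpha><k. dl (word_23 \<alpha> (k - 1 - \<alpha>)) x))"
proof (induction k)
  case 0
  then show ?case by (simp add: word_2_x0_0)
next
  case (Suc k)
  have short: "length x < 3 \<Longrightarrow> dl (word_23 \<alpha> \<beta>) x = 0" for x \<alpha> \<beta>
    by (auto simp: length_word_23)
  show ?case
  proof
    fix x
    show "sh (zw (twos (Suc k))) [X0] x =
      dl (word_2_x0 (Suc k)) x + 2 * (\<Sum>\<alpha><Suc k. dl (word_23 \<alpha> (Suc k - 1 - \<alpha>)) x)"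
    proof (cases x)
      case Nil
      then show ?thesis by (simp add: zw_twos_Suc word_2_x0_Suc dl_Cons_Nil short)
    next
      case (Cons c1 x1)
      show ?thesis
      proof (cases x1)
        case Nil
        then show ?thesis
          using Cons by (simp add: zw_twos_Suc word_2_x0_Suc dl_Cons_Nil dl_Cons_Cons short)
      next
        case (Cons c2 x2)
        then show ?thesis
          using \<open>x = c1 # x1\<close> Suc
          by (cases c1; cases c2) (simp_all add: zw_twos_Suc word_2_x0_Suc word_23_0 word_23_Suc
              dl_Cons_Cons sum.lessThan_Suc_shift del: sum.lessThan_Suc)
      qed
    qed
  qed
qed

lemma zw_inj: "pos k \<Longrightarrow> pos l \<Longrightarrow> zw k = zw l \<Longrightarrow> k = l"
proof (induction k arbitrary: l)
  case Nil
  then show ?case by (cases l) (simp_all add: zw_Cons)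
next
  case (Cons x k)
  then obtain y l' where l: "l = y # l'"
    by (cases l) (simp_all add: zw_Cons)
  have leading_X0: "replicate p X0 @ X1 # s = replicate q X0 @ X1 # t \<Longrightarrow> p = q \<and> s = t"
    for p q s t
  proof (induction p arbitrary: q)
    case 0
    then show ?case by (cases q) simp_all
  next
    case (Suc p)
    then show ?case by (cases q) simp_all
  qed
  from Cons.prems have "replicate (x - 1) X0 @ X1 # zw k = replicate (y - 1) X0 @ X1 # zw l'"
    by (simp add: zw_Cons l)
  then have "x - 1 = y - 1" "zw k = zw l'"
    using leading_X0 by blast+
  moreover have "0 < x" "0 < y" "pos k" "pos l'"
    using Cons.prems l by (auto simp: pos_def)
  ultimately show ?case
    using Cons.IH[of l'] l by simp
qed

lemma sum_list_st: "st k l m \<noteq> 0 \<Longrightarrow> sum_list m = sum_list k + sum_list l"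
proof (induction k l arbitrary: m rule: st.induct)
  case (3 i u j v)
  then obtain c m' where m: "m = c # m'"
    by (cases m) auto
  have "pre i (st u (j # v)) m \<noteq> 0 \<or> pre j (st (i # u) v) m \<noteq> 0 \<or> pre (i + j) (st u v) m \<noteq> 0"
    using "3.prems" by auto
  then consider "c = i" "st u (j # v) m' \<noteq> 0" | "c = j" "st (i # u) v m' \<noteq> 0"
    | "c = i + j" "st u v m' \<noteq> 0"
    unfolding m by (auto split: if_split_asm)
  then show ?case
    using "3.IH" m by cases simp_all
qed (auto split: if_split_asm)

lemma finite_pos_sum_list_le: "finite {k. pos k \<and> sum_list k \<le> s}"
proof (rule finite_subset)
  have "length k \<le> sum_list k" if "pos k" for k
    using that by (induction k) (auto simp: pos_def)
  then show "{k. pos k \<and> sum_list k \<le> s} \<subseteq> {xs. set xs \<subseteq> {0..s} \<and> length xs \<le> s}"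
    by (auto dest: member_le_sum_list) (meson le_trans)
qed (rule finite_lists_length_le, simp)

lemma stmul_dl: "pos k \<Longrightarrow> pos l \<Longrightarrow> stmul (dl k) (dl l) = st k l"
proof
  fix m assume k: "pos k" and l: "pos l"
  have fin: "finite {(k, l). sum_list k + sum_list l = sum_list m \<and> pos k \<and> pos l}"
    by (rule finite_subset[of _ "{k. pos k \<and> sum_list k \<le> sum_list m} \<times>
                                 {k. pos k \<and> sum_list k \<le> sum_list m}"])
       (auto intro: finite_pos_sum_list_le)
  show "stmul (dl k) (dl l) m = st k l m"
  proof (cases "sum_list k + sum_list l = sum_list m")
    case True
    then show ?thesis
      unfolding stmul_def using k l fin by (subst sum_eq_single[where x = "(k, l)"]) auto
  next
    case False
    then have "st k l m = 0"
      using sum_list_st by metis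
    moreover have "stmul (dl k) (dl l) m = 0"
      unfolding stmul_def using False by (intro sum.neutral) auto
    ultimately show ?thesis
      by simp
  qed
qed

lemma iota_inv_dl: "pos k \<Longrightarrow> iota_inv (dl (zw k)) = dl k"
  unfolding iota_inv_def by (auto simp: fun_eq_iff dl_def dest: zw_inj)

lemma iota_poly_add: "iota_poly (\<lambda>m. f m + g m) w = iota_poly f w + iota_poly g w"
  by (simp add: iota_poly_def sum.distrib)

lemma pos_twos_append_Cons: "pos (twos i @ p # twos j) \<longleftrightarrow> 0 < p"
  by (auto simp: pos_def twos_def)

lemma finite_zw_preimage: "finite {m. pos m \<and> zw m = w}"
proof (cases "\<exists>m. pos m \<and> zw m = w")
  case True
  then obtain m0 where "pos m0" "zw m0 = w"
    by blast
  then have "{m. pos m \<and> zw m = w} \<subseteq> {m0}"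
    using zw_inj by blast
  then show ?thesis
    by (rule finite_subset) simp
next
  case False
  then have "{m. pos m \<and> zw m = w} = {}"
    by blast
  then show ?thesis
    by (simp only: finite.emptyI)
qed

lemma iota_poly_sum_dl:
  assumes "finite A" "\<And>i. i \<in> A \<Longrightarrow> pos (k i)"
  shows "iota_poly (\<lambda>m. \<Sum>i\<in>A. dl (k i) m) w = (\<Sum>i\<in>A. dl (zw (k i)) w)"
proof -
  have "iota_poly (\<lambda>m. \<Sum>i\<in>A. dl (k i) m) w = (\<Sum>i\<in>A. \<Sum>m | pos m \<and> zw m = w. dl (k i) m)"
    unfolding iota_poly_def by (rule sum.swap)
  also have "\<dots> = (\<Sum>i\<in>A. dl (zw (k i)) w)"
    using assms(2) finite_zw_preimage by (intro sum.cong) (auto simp: dl_def)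
  finally show ?thesis .
qed

lemma st_singleton_twos:
  assumes "0 < p"
  shows "st [p] (twos m) = (\<lambda>x. (\<Sum>i<Suc m. dl (twos i @ [p] @ twos (m - i)) x)
                              + (\<Sum>i<m. dl (twos i @ [p + 2] @ twos (m - 1 - i)) x))"
proof (induction m)
  case 0
  then show ?case by simp
next
  case (Suc m)
  show ?case
  proof
    fix x
    show "st [p] (twos (Suc m)) x = (\<Sum>i<Suc (Suc m). dl (twos i @ [p] @ twos (Suc m - i)) x)
          + (\<Sum>i<Suc m. dl (twos i @ [p + 2] @ twos (Suc m - 1 - i)) x)"
    proof (cases x)
      case Nil
      then show ?thesis by (simp add: twos_Suc dl_def)
    next
      case (Cons y x')
      have ih: "st [p] (twos m) x' = (\<Sum>i<Suc m. dl (twos i @ [p] @ twos (m - i)) x')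
          + (\<Sum>i<m. dl (twos i @ [p + 2] @ twos (m - 1 - i)) x')"
        using Suc by simp
      have e1: "(\<Sum>i<Suc (Suc m). dl (twos i @ [p] @ twos (Suc m - i)) (y # x')) =
          dl (p # twos (Suc m)) (y # x')
          + (if y = 2 then (\<Sum>i<Suc m. dl (twos i @ [p] @ twos (m - i)) x') else 0)"
        by (simp only: sum.lessThan_Suc_shift) (simp add: twos_Suc dl_Cons_Cons)
      have e2: "(\<Sum>i<Suc m. dl (twos i @ [p + 2] @ twos (Suc m - 1 - i)) (y # x')) =
          dl ((p + 2) # twos m) (y # x')
          + (if y = 2 then (\<Sum>i<m. dl (twos i @ [p + 2] @ twos (m - 1 - i)) x') else 0)"
        by (simp only: sum.lessThan_Suc_shift) (simp add: twos_Suc dl_Cons_Cons)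
      show ?thesis
        unfolding Cons e1 e2 using ih assms by (simp add: twos_Suc dl_Cons_Cons)
    qed
  qed
qed

definition prod_odd_twos :: "nat \<Rightarrow> nat \<Rightarrow> poly" where
  "prod_odd_twos l m = shmul (dl (zw [2 * l + 1])) (dl (zw (twos m)))"

definition sum_odd_twos :: "nat \<Rightarrow> nat \<Rightarrow> poly" where
  "sum_odd_twos l m = (\<lambda>w. \<Sum>i<Suc m. dl (zw (twos i @ [2 * l + 1] @ twos (m - i))) w)"

lemma stuffle_odd_twos:
  assumes "1 \<le> l"
  shows "(\<lambda>w. prod_odd_twos l (Suc m) w - (sum_odd_twos l (Suc m) w + sum_odd_twos (Suc l) m w))
           \<in> Rid"
proof -
  define u where "u = dl (zw [2 * l + 1])"
  define v where "v = dl (zw (twos (Suc m)))"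
  have u_support: "\<forall>w. u w \<noteq> 0 \<longrightarrow> w = [] \<or> (\<exists>m. w = X0 # m @ [X1])"
    using assms by (auto simp: u_def zw_Cons intro: exI[of _ "replicate (2 * l - 1) X0"]
                         simp flip: replicate_Suc)
  have v_support: "\<forall>w. v w \<noteq> 0 \<longrightarrow> w = [] \<or> (\<exists>m. w = m @ [X1])"
    by (auto simp: v_def twos_Suc_snoc zw_append zw_Cons)
  have st: "stmul (iota_inv u) (iota_inv v) = st [2 * l + 1] (twos (Suc m))"
    unfolding u_def v_def using pos_twos[of "Suc m"]
    by (simp add: iota_inv_dl stmul_dl pos_def)
  have "iota_poly (stmul (iota_inv u) (iota_inv v)) w =
        sum_odd_twos l (Suc m) w + sum_odd_twos (Suc l) m w" for w
    unfolding st st_singleton_twos[OF zero_less_Suc[of "2 * l", unfolded Suc_eq_plus1]] iota_poly_add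
    by (simp add: iota_poly_sum_dl pos_twos_append_Cons sum_odd_twos_def del: sum.lessThan_Suc)
  moreover have "shmul u v = prod_odd_twos l (Suc m)"
    by (simp add: u_def v_def prod_odd_twos_def)
  ultimately show ?thesis
    using shmul_minus_stuffle_in_Rid[of u v] u_support v_support homogeneous_fsupp[OF homogeneous_dl]
    by (simp add: u_def v_def)
qed

lemma sum_odd_twos_telescope:
  assumes "1 \<le> l"
  shows "(\<lambda>w. sum_odd_twos l k w - (\<Sum>t<Suc k. (-1) ^ t * prod_odd_twos (l + t) (k - t) w)) \<in> Rid"
  using assms
proof (induction k arbitrary: l)
  case 0
  then show ?case
    by (simp add: sum_odd_twos_def prod_odd_twos_def shmul_dl Rid_def shideal.zero)
next
  case (Suc k)
  let ?stuffle = "\<lambda>w. prod_odd_twos l (Suc k) w - (sum_odd_twos l (Suc k) w + sum_odd_twos (Suc l) k w)"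
  let ?IH = "\<lambda>w. sum_odd_twos (Suc l) k w - (\<Sum>t<Suc k. (-1) ^ t * prod_odd_twos (Suc l + t) (k - t) w)"
  have "(\<lambda>w. (-1) * (?stuffle w + ?IH w)) \<in> Rid"
    using stuffle_odd_twos[OF Suc.prems] Suc.IH[of "Suc l"] by (intro Rid_smul Rid_add) simp_all
  moreover have "(\<lambda>w. (-1) * (?stuffle w + ?IH w)) =
    (\<lambda>w. sum_odd_twos l (Suc k) w - (\<Sum>t<Suc (Suc k). (-1) ^ t * prod_odd_twos (l + t) (Suc k - t) w))"
    by (simp only: sum.lessThan_Suc_shift[of _ "Suc k"]) (simp add: algebra_simps sum_negf)
  ultimately show ?case
    by simp
qed

lemma word_2_x0_in_Rid:
  assumes "1 \<le> r"
  shows "(\<lambda>w. dl (word_2_x0 r) w - 2 * (\<Sum>i = 1..r. (-1) ^ i * prod_odd_twos i (r - i) w)) \<in> Rid"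
proof -
  obtain k where k: "r = Suc k"
    using assms by (cases r) auto
  have "shmul (dl (zw (twos r))) (dl [X0]) \<in> Rid"
    unfolding Rid_def by (rule shideal.mult) (auto simp: Rgens_def intro: shideal.gen homogeneous_fsupp[OF homogeneous_dl])
  moreover have "shmul (dl (zw (twos r))) (dl [X0]) = (\<lambda>x. dl (word_2_x0 r) x + 2 * sum_odd_twos 1 k x)"
    unfolding shmul_dl sh_zw_twos_x0 by (simp add: sum_odd_twos_def k word_23_def)
  ultimately have reg: "(\<lambda>x. dl (word_2_x0 r) x + 2 * sum_odd_twos 1 k x) \<in> Rid"
    by simp
  have "(\<lambda>w. (dl (word_2_x0 r) w + 2 * sum_odd_twos 1 k w) -
      2 * (sum_odd_twos 1 k w - (\<Sum>t<Suc k. (-1) ^ t * prod_odd_twos (1 + t) (k - t) w))) \<in> Rid"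
    by (rule Rid_diff[OF reg Rid_smul[where c = 2, OF sum_odd_twos_telescope[of 1 k]]]) simp
  moreover have "(\<Sum>i = 1..r. (-1) ^ i * prod_odd_twos i (r - i) w) =
      - (\<Sum>t<Suc k. (-1) ^ t * prod_odd_twos (1 + t) (k - t) w)" for w
    unfolding k One_nat_def sum.atLeast1_atMost_eq by (simp add: sum_negf del: sum.lessThan_Suc)
  ultimately show ?thesis
    by (simp add: algebra_simps del: sum.lessThan_Suc)
qed

section \<open>The terms of the Goncharov coaction\<close>

lemma zip_tl_consecutive:
  "sorted_wrt (<) (L :: nat list) \<Longrightarrow> (i, j) \<in> set (zip L (tl L)) \<Longrightarrow>
     i < j \<and> i \<in> set L \<and> j \<in> set L \<and> (\<forall>k\<in>set L. \<not> (i < k \<and> k < j))"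
proof (induction L rule: induct_list012)
  case (3 x y L)
  have sorted: "sorted_wrt (<) (y # L)" "x < y" "\<forall>z\<in>set L. x < z \<and> y < z"
    using "3.prems"(1) by auto
  from "3.prems"(2) consider "(i, j) = (x, y)" | "(i, j) \<in> set (zip (y # L) (tl (y # L)))"
    by auto
  then show ?case
  proof cases
    case 1
    then show ?thesis using sorted by force
  next
    case 2
    then have "i < j \<and> i \<in> set (y # L) \<and> j \<in> set (y # L) \<and> (\<forall>k\<in>set (y # L). \<not> (i < k \<and> k < j))"
      using "3.IH"(2) sorted(1) by blast
    moreover from this have "x < i"
      using sorted by auto
    ultimately show ?thesis
      by auto
  qed
qed simp_all

lemma zip_tl_covers:
  "sorted_wrt (<) (L :: nat list) \<Longrightarrow> L \<noteq> [] \<Longrightarrow> hd L < k \<Longrightarrow> k < last L \<Longrightarrow> k \<notin> set L \<Longrightarrow>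
     \<exists>(i, j)\<in>set (zip L (tl L)). i < k \<and> k < j"
proof (induction L rule: induct_list012)
  case (3 x y L)
  show ?case
  proof (cases "k < y")
    case True
    then show ?thesis using "3.prems" by auto
  next
    case False
    then have "y < k" "sorted_wrt (<) (y # L)" "k < last (y # L)"
      using "3.prems" by auto
    then obtain i j where "(i, j) \<in> set (zip (y # L) (tl (y # L)))" "i < k" "k < j"
      using "3.IH"(2) "3.prems" by fastforce
    then show ?thesis
      by auto
  qed
qed simp_all

definition unit_or_positive :: "poly \<Rightarrow> bool" where
  "unit_or_positive p \<longleftrightarrow> p = dl [] \<or> (\<exists>d>0. homogeneous d p)"

lemma shprod_list_Nil [simp]: "shprod_list [] = dl []"
  by (simp add: shprod_list_def)

lemma shprod_list_Cons [simp]: "shprod_list (p # ps) = shmul p (shprod_list ps)"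
  by (simp add: shprod_list_def)

lemma shprod_list_units: "\<forall>p\<in>set ps. p = dl [] \<Longrightarrow> shprod_list ps = dl []"
  by (induction ps) auto

lemma shprod_list_single:
  "\<forall>q\<in>set ps \<union> set qs. q = dl [] \<Longrightarrow> shprod_list (ps @ p # qs) = p"
  by (induction ps) (auto simp: shprod_list_units)

lemma homogeneous_shprod_list:
  assumes "\<forall>p\<in>set ps. unit_or_positive p"
  shows "\<exists>d. homogeneous d (shprod_list ps) \<and> ((\<exists>p\<in>set ps. p [] = 0) \<longrightarrow> 0 < d)"
  using assms
proof (induction ps)
  case Nil
  then show ?case using homogeneous_dl[of "[]"] by auto
next
  case (Cons p ps)
  then obtain d where d: "homogeneous d (shprod_list ps)" "(\<exists>p\<in>set ps. p [] = 0) \<longrightarrow> 0 < d"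
    by auto
  from Cons.prems consider "p = dl []" | e where "0 < e" "homogeneous e p"
    by (auto simp: unit_or_positive_def)
  then show ?case
  proof cases
    case 1
    then show ?thesis using d by auto
  next
    case 2
    then show ?thesis using homogeneous_shmul[OF 2(2) d(1)] by auto
  qed
qed

lemma shprod_list_in_qspan_positive_products:
  assumes "\<forall>p\<in>set ps. unit_or_positive p" "2 \<le> length (filter (\<lambda>p. p [] = 0) ps)"
  shows "shprod_list ps \<in> qspan positive_products"
  using assms
proof (induction ps)
  case (Cons p ps)
  show ?case
  proof (cases "p [] = 0")
    case True
    then obtain d where d: "0 < d" "homogeneous d p"
      using Cons.prems(1) by (auto simp: unit_or_positive_def)
    have "filter (\<lambda>p. p [] = 0) ps \<noteq> []"
      using Cons.prems(2) True by auto
    then have "\<exists>p\<in>set ps. p [] = 0"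
      by (simp add: filter_empty_conv)
    then obtain e where e: "0 < e" "homogeneous e (shprod_list ps)"
      using homogeneous_shprod_list[of ps] Cons.prems(1) by auto
    have "shmul p (shprod_list ps) \<in> positive_products"
      unfolding positive_products_def using d e homogeneous_fsupp homogeneous_Nil by blast
    then show ?thesis
      by (simp add: qspan.base)
  next
    case False
    then have "p = dl []"
      using Cons.prems(1) homogeneous_Nil by (auto simp: unit_or_positive_def)
    moreover have "shprod_list ps \<in> qspan positive_products"
      using Cons False by simp
    ultimately show ?thesis
      by simp
  qed
qed simp

abbreviation framed :: "word \<Rightarrow> word" where
  "framed w \<equiv> X1 # w @ [X0]"

definition cut_points :: "nat \<Rightarrow> nat set \<Rightarrow> nat list" where
  "cut_points n T = 0 # sorted_list_of_set T @ [n + 1]"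

definition cut_pairs :: "nat \<Rightarrow> nat set \<Rightarrow> (nat \<times> nat) list" where
  "cut_pairs n T = zip (cut_points n T) (tl (cut_points n T))"

definition segment :: "word \<Rightarrow> nat \<times> nat \<Rightarrow> poly" where
  "segment w = (\<lambda>(i, j). Iseg (framed w ! i) (take (j - i - 1) (drop (i + 1) (framed w))) (framed w ! j))"

lemma gon_left_eq: "gon_left w T = shprod_list (map (segment w) (cut_pairs (length w) T))"
  unfolding gon_left_def cut_pairs_def cut_points_def segment_def Let_def by simp

lemma sorted_cut_points: "T \<subseteq> {1..n} \<Longrightarrow> sorted_wrt (<) (cut_points n T)"
  using finite_subset[of T "{1..n}"] strict_sorted_list_of_set[of T]
  by (auto simp: cut_points_def sorted_wrt_append)

lemma set_cut_points: "T \<subseteq> {1..n} \<Longrightarrow> set (cut_points n T) = insert 0 (insert (n + 1) T)"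
  unfolding cut_points_def using finite_subset[of T "{1..n}"] by auto

lemma cut_pairs_consecutive:
  assumes "T \<subseteq> {1..n}" "(i, j) \<in> set (cut_pairs n T)"
  shows "i < j" "j \<le> n + 1" "i = 0 \<or> i \<in> T" "j = n + 1 \<or> j \<in> T" "\<forall>k\<in>T. \<not> (i < k \<and> k < j)"
  using zip_tl_consecutive[OF sorted_cut_points[OF assms(1)] assms(2)[unfolded cut_pairs_def]]
    set_cut_points[OF assms(1)] assms(1) by auto

lemma cut_pairs_cover:
  assumes "T \<subseteq> {1..n}" "k \<in> {1..n}" "k \<notin> T"
  shows "\<exists>(i, j)\<in>set (cut_pairs n T). i < k \<and> k < j"
  unfolding cut_pairs_def
  by (rule zip_tl_covers[OF sorted_cut_points[OF assms(1)]])
     (use assms set_cut_points[OF assms(1)] in \<open>auto simp: cut_points_def\<close>)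

lemma distinct_cut_pairs: "T \<subseteq> {1..n} \<Longrightarrow> distinct (cut_pairs n T)"
  unfolding cut_pairs_def
  by (rule distinct_zipI1) (use sorted_cut_points strict_sorted_iff in blast)

lemma Iseg_Nil: "Iseg c [] d = dl []"
  by (cases c; cases d) (simp_all add: Iseg_def)

lemma homogeneous_Iseg: "homogeneous (length f) (Iseg c f d)"
  unfolding Iseg_def by (auto simp: homogeneous_def dl_def)

lemma homogeneous_segment:
  assumes "T \<subseteq> {1..length w}" "(i, j) \<in> set (cut_pairs (length w) T)"
  shows "homogeneous (j - i - 1) (segment w (i, j))"
proof -
  have "length (take (j - i - 1) (drop (i + 1) (framed w))) = j - i - 1"
    using cut_pairs_consecutive(1,2)[OF assms] by simp
  then show ?thesis
    unfolding segment_def prod.case by (metis homogeneous_Iseg)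
qed

lemma segment_unit:
  assumes "T \<subseteq> {1..length w}" "(i, j) \<in> set (cut_pairs (length w) T)" "\<not> i + 1 < j"
  shows "segment w (i, j) = dl []"
  using assms(3) by (simp add: segment_def Iseg_Nil)

lemma unit_or_positive_segment:
  assumes "T \<subseteq> {1..length w}" "x \<in> set (cut_pairs (length w) T)"
  shows "unit_or_positive (segment w x)"
proof -
  obtain i j where x: "x = (i, j)"
    by (cases x)
  show ?thesis
  proof (cases "i + 1 < j")
    case True
    then show ?thesis
      using homogeneous_segment[OF assms(1)] assms(2) unfolding x unit_or_positive_def
      by (intro disjI2 exI[of _ "j - i - 1"]) simp
  next
    case False
    then show ?thesis
      using segment_unit[OF assms(1)] assms(2) unfolding x unit_or_positive_def by simp
  qed
qed

lemma segment_Nil_eq_0_iff: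
  assumes "T \<subseteq> {1..length w}" "(i, j) \<in> set (cut_pairs (length w) T)"
  shows "segment w (i, j) [] = 0 \<longleftrightarrow> i + 1 < j"
  using homogeneous_Nil[OF homogeneous_segment[OF assms]] segment_unit[OF assms] by fastforce

definition long_cut_pairs :: "nat \<Rightarrow> nat set \<Rightarrow> (nat \<times> nat) list" where
  "long_cut_pairs n T = filter (\<lambda>(i, j). i + 1 < j) (cut_pairs n T)"

lemma set_long_cut_pairs:
  "(i, j) \<in> set (long_cut_pairs n T) \<longleftrightarrow> (i, j) \<in> set (cut_pairs n T) \<and> i + 1 < j"
  by (simp add: long_cut_pairs_def)

lemma gon_left_single_long_pair:
  assumes "T \<subseteq> {1..length w}" "long_cut_pairs (length w) T = [x]"
  shows "gon_left w T = segment w x"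
proof -
  obtain us vs where split: "cut_pairs (length w) T = us @ x # vs"
    and us: "\<forall>u\<in>set us. \<not> (case u of (i, j) \<Rightarrow> i + 1 < j)"
    and vs: "[] = filter (\<lambda>(i, j). i + 1 < j) vs"
    using assms(2) unfolding long_cut_pairs_def filter_eq_Cons_iff by blast
  have "\<forall>u\<in>set us \<union> set vs. segment w u = dl []"
  proof
    fix u assume u: "u \<in> set us \<union> set vs"
    then have "\<not> (case u of (i, j) \<Rightarrow> i + 1 < j)"
      using us vs by (metis Un_iff empty_filter_conv)
    then show "segment w u = dl []"
      using u segment_unit[OF assms(1), of "fst u" "snd u"] by (auto simp: split split_beta)
  qed
  then have "\<forall>q\<in>set (map (segment w) us) \<union> set (map (segment w) vs). q = dl []"
    by auto
  then show ?thesis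
    unfolding gon_left_eq split by (simp add: shprod_list_single)
qed

definition outside_block :: "nat \<Rightarrow> nat \<Rightarrow> nat \<Rightarrow> nat set" where
  "outside_block n i m = {1..n} - {i + 1..i + m}"

lemma long_cut_pairs_single:
  assumes "T \<subseteq> {1..n}" "long_cut_pairs n T = [(i, j)]"
  shows "T = outside_block n i (j - i - 1)" "i + (j - i - 1) \<le> n"
proof -
  have ij: "(i, j) \<in> set (cut_pairs n T)" "i + 1 < j"
    using set_long_cut_pairs[of i j n T] assms(2) by simp_all
  note consecutive = cut_pairs_consecutive[OF assms(1) ij(1)]
  have uncut: "k \<in> T" if k: "k \<in> {1..n}" and outside: "\<not> (i < k \<and> k < j)" for k
  proof (rule ccontr)
    assume "k \<notin> T"
    then obtain i' j' where "(i', j') \<in> set (cut_pairs n T)" "i' < k" "k < j'"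
      using cut_pairs_cover[OF assms(1) k] by blast
    then have "(i', j') \<in> set (long_cut_pairs n T)"
      using set_long_cut_pairs by simp
    then have "i' = i" "j' = j"
      using assms(2) by simp_all
    with \<open>i' < k\<close> \<open>k < j'\<close> outside show False
      by simp
  qed
  show "T = outside_block n i (j - i - 1)"
  proof (rule set_eqI)
    fix k
    show "k \<in> T \<longleftrightarrow> k \<in> outside_block n i (j - i - 1)"
      using uncut[of k] consecutive(5) assms(1) ij(2) by (auto simp: outside_block_def)
  qed
  show "i + (j - i - 1) \<le> n"
    using consecutive(2) ij(2) by simp
qed

lemma long_cut_pairs_ne_Nil:
  assumes "T \<subseteq> {1..n}" "T \<noteq> {1..n}"
  shows "long_cut_pairs n T \<noteq> []"
proof -
  obtain k where "k \<in> {1..n}" "k \<notin> T"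
    using assms by blast
  then obtain i j where "(i, j) \<in> set (cut_pairs n T)" "i < k" "k < j"
    using cut_pairs_cover[OF assms(1)] by blast
  then have "(i, j) \<in> set (long_cut_pairs n T)"
    using set_long_cut_pairs by simp
  then show ?thesis
    by auto
qed

lemma gon_left_in_qspan_positive_products:
  assumes "T \<subseteq> {1..length w}" "2 \<le> length (long_cut_pairs (length w) T)"
  shows "gon_left w T \<in> qspan positive_products"
proof -
  let ?ps = "map (segment w) (cut_pairs (length w) T)"
  have "filter (\<lambda>p. p [] = 0) ?ps = map (segment w) (long_cut_pairs (length w) T)"
    unfolding filter_map long_cut_pairs_def
    by (rule arg_cong[OF filter_cong]) (auto simp: segment_Nil_eq_0_iff[OF assms(1)])
  then show ?thesis
    unfolding gon_left_eq using assms unit_or_positive_segment[OF assms(1)]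
    by (intro shprod_list_in_qspan_positive_products) auto
qed

lemma gon_left_in_piker:
  assumes "T \<subseteq> {1..length w}" "T \<noteq> {1..length w}"
    "\<And>i. i + m \<le> length w \<Longrightarrow> T \<noteq> outside_block (length w) i m"
  shows "gon_left w T \<in> piker m"
proof -
  let ?n = "length w"
  obtain x xs where long: "long_cut_pairs ?n T = x # xs"
    using long_cut_pairs_ne_Nil[OF assms(1,2)] by (cases "long_cut_pairs ?n T") auto
  show ?thesis
  proof (cases xs)
    case Nil
    obtain i j where x: "x = (i, j)"
      by (cases x)
    with long Nil have single: "long_cut_pairs ?n T = [(i, j)]"
      by simp
    then have "(i, j) \<in> set (cut_pairs ?n T)"
      using set_long_cut_pairs[of i j ?n T] by simp
    then have "homogeneous (j - i - 1) (gon_left w T)"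
      using homogeneous_segment[OF assms(1)] gon_left_single_long_pair[OF assms(1) single] by simp
    moreover have "j - i - 1 \<noteq> m"
      using assms(3) long_cut_pairs_single[OF assms(1) single] by auto
    ultimately show ?thesis
      by (rule piker_homogeneous_other)
  next
    case (Cons y ys)
    have "\<forall>p\<in>set (map (segment w) (cut_pairs ?n T)). unit_or_positive p"
      using unit_or_positive_segment[OF assms(1)] by auto
    then obtain d where "homogeneous d (gon_left w T)"
      using homogeneous_shprod_list unfolding gon_left_eq by blast
    moreover have "gon_left w T \<in> qspan positive_products"
      using long Cons by (intro gon_left_in_qspan_positive_products[OF assms(1)]) simp
    ultimately show ?thesis
      by (rule piker_homogeneous_positive_products)
  qed
qed

lemma long_cut_pair_outside_block:
  assumes "i + m \<le> n" "(i', j') \<in> set (long_cut_pairs n (outside_block n i m))"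
  shows "i' = i" "j' = i + m + 1"
proof -
  let ?T = "outside_block n i m"
  have T: "?T \<subseteq> {1..n}"
    by (auto simp: outside_block_def)
  have long: "(i', j') \<in> set (cut_pairs n ?T)" "i' + 1 < j'"
    using assms(2) set_long_cut_pairs by simp_all
  note consecutive = cut_pairs_consecutive[OF T long(1)]
  have "i' + 1 \<notin> ?T"
    using consecutive(5) long(2) by auto
  moreover have "i' + 1 \<in> {1..n}"
    using consecutive(1,2) long(2) by auto
  ultimately have "i + 1 \<le> i' + 1" "i' + 1 \<le> i + m"
    by (auto simp: outside_block_def)
  then show i': "i' = i"
    using consecutive(3) by (auto simp: outside_block_def)
  have "i + m + 1 \<le> j'"
    using consecutive(4) long(2) assms(1) i' by (auto simp: outside_block_def)
  moreover have "j' \<le> i + m + 1"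
  proof (rule ccontr)
    assume far: "\<not> j' \<le> i + m + 1"
    then have "i + m + 1 \<in> ?T"
      using consecutive(2) by (simp add: outside_block_def)
    then show False
      using consecutive(5) i' far by auto
  qed
  ultimately show "j' = i + m + 1"
    by simp
qed

lemma long_cut_pairs_outside_block:
  assumes "i + m \<le> n" "1 \<le> m"
  shows "long_cut_pairs n (outside_block n i m) = [(i, i + m + 1)]"
proof -
  let ?T = "outside_block n i m"
  have T: "?T \<subseteq> {1..n}"
    by (auto simp: outside_block_def)
  have "i + 1 \<in> {1..n}" "i + 1 \<notin> ?T"
    using assms by (auto simp: outside_block_def)
  then obtain i' j' where "(i', j') \<in> set (cut_pairs n ?T)" "i' < i + 1" "i + 1 < j'"
    using cut_pairs_cover[OF T] by blast
  then have "(i', j') \<in> set (long_cut_pairs n ?T)"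
    using set_long_cut_pairs by simp
  then have set_eq: "set (long_cut_pairs n ?T) = {(i, i + m + 1)}"
    using long_cut_pair_outside_block[OF assms(1)] by fast
  moreover have "distinct (long_cut_pairs n ?T)"
    unfolding long_cut_pairs_def by (rule distinct_filter, rule distinct_cut_pairs[OF T])
  ultimately have "length (long_cut_pairs n ?T) = 1"
    using distinct_card by fastforce
  then obtain y where "long_cut_pairs n ?T = [y]"
    by (auto simp: length_Suc_conv)
  then show ?thesis
    using set_eq by simp
qed

lemma sorted_list_of_outside_block:
  assumes "i + m \<le> n"
  shows "sorted_list_of_set (outside_block n i m) = [1..<i + 1] @ [i + m + 1..<n + 1]"
proof -
  let ?l = "[1..<i + 1] @ [i + m + 1..<n + 1]"
  have sorted: "sorted_wrt (<) ?l"
    by (auto simp: sorted_wrt_append)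
  have set: "set ?l = outside_block n i m"
    using assms by (auto simp: outside_block_def)
  have "length ?l = card (set ?l)"
    using distinct_card[symmetric] sorted strict_sorted_iff by blast
  then show ?thesis
    using sorted_list_of_set_unique[of "outside_block n i m" ?l] sorted set
    by (simp add: outside_block_def)
qed

lemma gon_left_outside_block:
  assumes "i + m \<le> length w" "1 \<le> m"
  shows "gon_left w (outside_block (length w) i m) = segment w (i, i + m + 1)"
  by (rule gon_left_single_long_pair[OF _ long_cut_pairs_outside_block[OF assms]])
     (auto simp: outside_block_def)

lemma gon_right_outside_block:
  assumes "i + m \<le> length w"
  shows "gon_right w (outside_block (length w) i m) =
           map ((!) (framed w)) ([1..<i + 1] @ [i + m + 1..<length w + 1])"
  unfolding gon_right_def sorted_list_of_outside_block[OF assms] ..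

lemma inj_on_outside_block:
  assumes "1 \<le> m" "m \<le> n"
  shows "inj_on (\<lambda>i. outside_block n i m) {0..n - m}"
proof (rule inj_onI)
  fix i j assume i: "i \<in> {0..n - m}" and j: "j \<in> {0..n - m}"
    and eq: "outside_block n i m = outside_block n j m"
  have "i + 1 \<notin> outside_block n i m" "j + 1 \<notin> outside_block n j m"
    using assms by (simp_all add: outside_block_def)
  then have "i + 1 \<notin> outside_block n j m" "j + 1 \<notin> outside_block n i m"
    unfolding eq by simp_all
  moreover have "i + 1 \<in> {1..n}" "j + 1 \<in> {1..n}"
    using assms i j by auto
  ultimately have "i + 1 \<in> {j + 1..j + m}" "j + 1 \<in> {i + 1..i + m}"
    unfolding outside_block_def by blast+
  then show "i = j"
    by simp
qed

lemma gon_left_full: "gon_left w {1..length w} = dl []"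
proof -
  have units: "segment w x = dl []" if "x \<in> set (cut_pairs (length w) {1..length w})" for x
  proof -
    obtain i j where x: "x = (i, j)"
      by (cases x)
    note consecutive = cut_pairs_consecutive[OF _ that[unfolded x]]
    have "\<not> i + 1 < j"
      using consecutive(2,5) by fastforce
    then show ?thesis
      using segment_unit that x by blast
  qed
  show ?thesis
    unfolding gon_left_eq by (rule shprod_list_units) (use units in auto)
qed

lemma gon_right_full: "gon_right w {1..length w} = w"
  unfolding gon_right_def atLeastLessThanSuc_atLeastAtMost[symmetric] sorted_list_of_set_range
  by (rule nth_equalityI) (simp_all add: nth_append del: upt_Suc)

lemma gon_red_eq_sum_proper_subsets:
  "gon_red w x = (\<Sum>T\<in>Pow {1..length w} - {{1..length w}}.
                    tens (gon_left w T) (dl (gon_right w T)) x)"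
proof -
  have "gon w x = (\<Sum>T\<in>Pow {1..length w}. tens (gon_left w T) (dl (gon_right w T)) x)"
    by (cases x) (simp add: gon_def tens_def dl_def)
  also have "\<dots> = tens (dl []) (dl w) x +
      (\<Sum>T\<in>Pow {1..length w} - {{1..length w}}. tens (gon_left w T) (dl (gon_right w T)) x)"
    by (subst sum.remove[of _ "{1..length w}"]) (simp_all only: gon_left_full gon_right_full
                                                  finite_Pow_iff finite_atLeastAtMost Pow_top)
  finally show ?thesis
    unfolding gon_red_def by simp
qed

lemma gon_red_mod_block_terms:
  assumes "1 \<le> m" "m \<le> length w"
  shows "(\<lambda>x. gon_red w x - (\<Sum>i = 0..length w - m.
            tens (segment w (i, i + m + 1)) (dl (gon_right w (outside_block (length w) i m))) x))
         \<in> tker m"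
proof -
  let ?n = "length w" and ?t = "\<lambda>T. tens (gon_left w T) (dl (gon_right w T))"
  let ?B = "(\<lambda>i. outside_block ?n i m) ` {0..?n - m}"
  let ?R = "Pow {1..?n} - {{1..?n}} - ?B"
  have B: "?B \<subseteq> Pow {1..?n} - {{1..?n}}"
    using assms by (fastforce simp: outside_block_def)
  have fin: "finite (Pow {1..?n} - {{1..?n}})"
    by simp
  have blocks: "(\<Sum>T\<in>?B. ?t T x) = (\<Sum>i = 0..?n - m.
          tens (segment w (i, i + m + 1)) (dl (gon_right w (outside_block ?n i m))) x)" for x
    using assms by (simp add: sum.reindex[OF inj_on_outside_block] gon_left_outside_block)
  have "gon_red w x - (\<Sum>i = 0..?n - m.
          tens (segment w (i, i + m + 1)) (dl (gon_right w (outside_block ?n i m))) x)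
        = (\<Sum>T\<in>?R. ?t T x)" for x
    unfolding gon_red_eq_sum_proper_subsets sum.subset_diff[OF B fin]
    by (simp add: blocks)
  then have "(\<lambda>x. gon_red w x - (\<Sum>i = 0..?n - m.
          tens (segment w (i, i + m + 1)) (dl (gon_right w (outside_block ?n i m))) x))
        = (\<lambda>x. \<Sum>T\<in>?R. ?t T x)"
    by (rule ext)
  moreover have "?t T \<in> tker m" if "T \<in> ?R" for T
    using that by (intro tens_in_tker gon_left_in_piker homogeneous_fsupp[OF homogeneous_dl])
                  (auto simp: image_iff)
  then have "(\<lambda>x. \<Sum>T\<in>?R. ?t T x) \<in> tker m"
    by (intro tker_sum) simp_all
  ultimately show ?thesis
    by simp
qed

section \<open>The blocks of \<open>\<zeta>({2}\<^sup>a,3,{2}\<^sup>b)\<close>\<close>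

text \<open>Letter \<open>p\<close> of the framed word \<open>x\<^sub>1 \<zeta>({2}\<^sup>a,3,{2}\<^sup>b) x\<^sub>0\<close>, which alternates
  \<open>x\<^sub>1x\<^sub>0\<dots>\<close> except for the repeated \<open>x\<^sub>0\<close> at positions \<open>2a + 1, 2a + 2\<close>.\<close>

definition framed_letter :: "nat \<Rightarrow> nat \<Rightarrow> letter" where
  "framed_letter a p = (if (p \<le> 2 * a + 1) = even p then X1 else X0)"

lemma word_23_nth: "k < length (word_23 a b) \<Longrightarrow> word_23 a b ! k = framed_letter a (Suc k)"
  by (simp add: word_23_eq_map framed_letter_def flipped_letter_def if_letter_eq_iff)

lemma framed_word_23_nth:
  assumes "p \<le> 2 * a + 2 * b + 4"
  shows "framed (word_23 a b) ! p = framed_letter a p"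
proof (cases p)
  case (Suc k)
  then show ?thesis
    using assms word_23_nth[of k a b]
    by (auto simp: nth_append length_word_23 framed_letter_def) presburger
qed (simp add: framed_letter_def)

definition block_coeff :: "nat \<Rightarrow> nat \<Rightarrow> nat \<Rightarrow> poly" where
  "block_coeff a r i =
     Iseg (framed_letter a i) (map (framed_letter a) [i + 1..<i + 2 * r + 2]) (framed_letter a (i + 2 * r + 2))"

lemma segment_word_23:
  assumes "i + (2 * r + 1) \<le> length (word_23 a b)"
  shows "segment (word_23 a b) (i, i + (2 * r + 1) + 1) = block_coeff a r i"
proof -
  have "take (2 * r + 1) (drop (i + 1) (framed (word_23 a b))) =
          map (framed_letter a) [i + 1..<i + 2 * r + 2]"
    using assms by (intro map_upt_eqI[symmetric]) (simp_all add: word_23_nth length_word_23)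
  moreover have "framed (word_23 a b) ! i = framed_letter a i"
    "framed (word_23 a b) ! (i + 2 * r + 2) = framed_letter a (i + 2 * r + 2)"
    using assms framed_word_23_nth[of i a b] framed_word_23_nth[of "i + 2 * r + 2" a b]
    by (simp_all add: length_word_23)
  moreover have "i + (2 * r + 1) + 1 = i + 2 * r + 2" "i + 2 * r + 2 - i - 1 = 2 * r + 1"
    by simp_all
  ultimately show ?thesis
    unfolding segment_def block_coeff_def prod.case by metis
qed


lemma map_upt_shift_eq:
  "m + n = p \<Longrightarrow> (\<And>k. k < n \<Longrightarrow> f (m + k) = g k) \<Longrightarrow> map f [m..<p] = map g [0..<n]"
  by (rule nth_equalityI) auto

lemma rev_map_upt_shift_eq:
  "m + n = p \<Longrightarrow> (\<And>k. k < n \<Longrightarrow> f (m + (n - 1 - k)) = g k) \<Longrightarrow> rev (map f [m..<p]) = map g [0..<n]"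
  by (rule nth_equalityI) (auto simp: rev_nth)

lemma Iseg_X1_X0: "Iseg X1 f X0 = dl f"
  by (simp add: Iseg_def)

lemma Iseg_X0_X1: "Iseg X0 f X1 = (\<lambda>w. (-1) ^ length f * dl (rev f) w)"
  by (simp add: Iseg_def)

lemma Iseg_same: "f \<noteq> [] \<Longrightarrow> Iseg c f c = (\<lambda>_. 0)"
  by (cases c) (simp_all add: Iseg_def)

lemma block_coeff_word_23:
  assumes "even i" "i div 2 \<le> a" "a < i div 2 + r"
  shows "block_coeff a r i = dl (word_23 (a - i div 2) (i div 2 + r - a - 1))"
proof -
  obtain s where s: "i = 2 * s"
    using assms(1) by blast
  have ends: "framed_letter a i = X1" "framed_letter a (i + 2 * r + 2) = X0"
    using assms s by (simp_all add: framed_letter_def)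
  have "framed_letter a (i + 1 + k) = flipped_letter (2 * (a - s)) k" for k
    unfolding framed_letter_def flipped_letter_def if_letter_eq_iff using assms s by presburger
  then have letters: "map (framed_letter a) [i + 1..<i + 2 * r + 2] =
                       map (flipped_letter (2 * (a - s))) [0..<2 * r + 1]"
    by (intro map_upt_shift_eq) simp_all
  have half: "i div 2 = s"
    using s by simp
  have length: "2 * (a - s) + 2 * (s + r - a - 1) + 3 = 2 * r + 1"
    using assms half by simp
  show ?thesis
    unfolding block_coeff_def ends Iseg_X1_X0 word_23_eq_map half length letters ..
qed

lemma block_coeff_word_2_x0:
  assumes "r \<le> a"
  shows "block_coeff a r (2 * (a - r)) = dl (word_2_x0 r)"
proof -
  have ends: "framed_letter a (2 * (a - r)) = X1" "framed_letter a (2 * (a - r) + 2 * r + 2) = X0"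
    using assms by (simp_all add: framed_letter_def)
  have "framed_letter a (2 * (a - r) + 1 + k) = flipped_letter (2 * r) k" for k
    unfolding framed_letter_def flipped_letter_def if_letter_eq_iff using assms by presburger
  then have "map (framed_letter a) [2 * (a - r) + 1..<2 * (a - r) + 2 * r + 2] =
               map (flipped_letter (2 * r)) [0..<2 * r + 1]"
    by (intro map_upt_shift_eq) simp_all
  then show ?thesis
    unfolding block_coeff_def ends Iseg_X1_X0 word_2_x0_eq_map by simp
qed

lemma block_coeff_rev_word_23:
  assumes "odd i" "i div 2 < a" "a \<le> i div 2 + r"
  shows "block_coeff a r i = (\<lambda>w. - dl (word_23 (i div 2 + r - a) (a - i div 2 - 1)) w)"
proof -
  obtain s where s: "i = 2 * s + 1"
    using assms(1) oddE by blast
  have ends: "framed_letter a i = X0" "framed_letter a (i + 2 * r + 2) = X1"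
    using assms s by (simp_all add: framed_letter_def)
  have half: "i div 2 = s"
    using s by simp
  have "framed_letter a (i + 1 + (2 * r + 1 - 1 - k)) = flipped_letter (2 * (s + r - a)) k"
    if "k < 2 * r + 1" for k
  proof -
    have "even (i + 1 + (2 * r + 1 - 1 - k)) \<longleftrightarrow> even k"
      using that s by presburger
    moreover have "i + 1 + (2 * r + 1 - 1 - k) \<le> 2 * a + 1 \<longleftrightarrow> \<not> k \<le> 2 * (s + r - a)"
      using that assms(2,3) s half by linarith
    ultimately show ?thesis
      unfolding framed_letter_def flipped_letter_def if_letter_eq_iff by auto
  qed
  then have letters: "rev (map (framed_letter a) [i + 1..<i + 2 * r + 2]) =
                        map (flipped_letter (2 * (s + r - a))) [0..<2 * r + 1]"
    by (intro rev_map_upt_shift_eq) simp_all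
  have length: "2 * (s + r - a) + 2 * (a - s - 1) + 3 = 2 * r + 1"
    using assms half by simp
  show ?thesis
    unfolding block_coeff_def ends Iseg_X0_X1 word_23_eq_map half length letters by simp
qed

lemma block_coeff_rev_word_2_x0: "block_coeff a r (2 * a + 1) = (\<lambda>w. - dl (word_2_x0 r) w)"
proof -
  have ends: "framed_letter a (2 * a + 1) = X0" "framed_letter a (2 * a + 1 + 2 * r + 2) = X1"
    by (simp_all add: framed_letter_def)
  have "framed_letter a (2 * a + 1 + 1 + (2 * r + 1 - 1 - k)) = flipped_letter (2 * r) k"
    if "k < 2 * r + 1" for k
    unfolding framed_letter_def flipped_letter_def if_letter_eq_iff using that by presburger
  then have "rev (map (framed_letter a) [2 * a + 1 + 1..<2 * a + 1 + 2 * r + 2]) =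
               map (flipped_letter (2 * r)) [0..<2 * r + 1]"
    by (intro rev_map_upt_shift_eq) simp_all
  then show ?thesis
    unfolding block_coeff_def ends Iseg_X0_X1 word_2_x0_eq_map by simp
qed

lemma block_coeff_eq_0:
  assumes "framed_letter a i = framed_letter a (i + 2 * r + 2)"
  shows "block_coeff a r i = (\<lambda>_. 0)"
  using assms by (simp add: block_coeff_def Iseg_same)

lemma block_coeff_eq:
  "block_coeff a r i x =
     (if even i \<and> i div 2 \<le> a \<and> a < i div 2 + r then dl (word_23 (a - i div 2) (i div 2 + r - a - 1)) x else 0)
   + (if i = 2 * (a - r) \<and> r \<le> a then dl (word_2_x0 r) x else 0)
   - (if odd i \<and> i div 2 < a \<and> a \<le> i div 2 + r then dl (word_23 (i div 2 + r - a) (a - i div 2 - 1)) x else 0)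
   - (if i = 2 * a + 1 then dl (word_2_x0 r) x else 0)"
proof -
  consider (inner_even) "even i \<and> i div 2 \<le> a \<and> a < i div 2 + r" | (start_even) "i = 2 * (a - r) \<and> r \<le> a"
    | (inner_odd) "odd i \<and> i div 2 < a \<and> a \<le> i div 2 + r" | (start_odd) "i = 2 * a + 1"
    | (vanishing) "\<not> (even i \<and> i div 2 \<le> a \<and> a < i div 2 + r)" "\<not> (i = 2 * (a - r) \<and> r \<le> a)"
      "\<not> (odd i \<and> i div 2 < a \<and> a \<le> i div 2 + r)" "i \<noteq> 2 * a + 1"
    by blast
  then show ?thesis
  proof cases
    case inner_even
    then have "\<not> (i = 2 * (a - r) \<and> r \<le> a)" "\<not> odd i" "i \<noteq> 2 * a + 1"
      by auto
    with inner_even show ?thesis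
      using block_coeff_word_23 by auto
  next
    case start_even
    then have "\<not> (even i \<and> i div 2 \<le> a \<and> a < i div 2 + r)" "\<not> odd i" "i \<noteq> 2 * a + 1"
      by auto
    with start_even show ?thesis
      using block_coeff_word_2_x0 by auto
  next
    case inner_odd
    then have "\<not> even i" "\<not> (i = 2 * (a - r) \<and> r \<le> a)" "i \<noteq> 2 * a + 1"
      by auto
    with inner_odd show ?thesis
      using block_coeff_rev_word_23 by auto
  next
    case start_odd
    then have "\<not> even i" "\<not> (i = 2 * (a - r) \<and> r \<le> a)" "\<not> (i div 2 < a)"
      by auto
    with start_odd show ?thesis
      using block_coeff_rev_word_2_x0 by auto
  next
    case vanishing
    then have letters: "framed_letter a i = framed_letter a (i + 2 * r + 2)"
      unfolding framed_letter_def if_letter_eq_iff by presburger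
    show ?thesis
      unfolding block_coeff_eq_0[OF letters] if_not_P[OF vanishing(1)] if_not_P[OF vanishing(2)]
        if_not_P[OF vanishing(3)] if_not_P[OF vanishing(4)] by simp
  qed
qed


lemma block_coeff_nonzero_bounds:
  assumes "block_coeff a r i \<noteq> (\<lambda>_. 0)"
  shows "i \<le> 2 * a + 1" "2 * a + 2 \<le> i + 2 * r + 2"
proof -
  have "framed_letter a i \<noteq> framed_letter a (i + 2 * r + 2)"
    using assms block_coeff_eq_0 by blast
  then have "(i \<le> 2 * a + 1) \<noteq> (i + 2 * r + 2 \<le> 2 * a + 1)"
    unfolding framed_letter_def if_letter_eq_iff by presburger
  then show "i \<le> 2 * a + 1" "2 * a + 2 \<le> i + 2 * r + 2"
    by auto
qed

lemma gon_right_word_23_outside_block: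
  assumes "r \<le> a + b" "i \<le> 2 * a + 2 * b + 2 - 2 * r" "block_coeff a r i \<noteq> (\<lambda>_. 0)"
  shows "gon_right (word_23 a b) (outside_block (length (word_23 a b)) i (2 * r + 1)) =
           zw (twos (a + b + 1 - r))"
proof -
  let ?n = "2 * a + 2 * b + 3"
  have fits: "i + (2 * r + 1) \<le> ?n"
    using assms(1,2) by simp
  note bounds = block_coeff_nonzero_bounds[OF assms(3)]
  let ?l = "[1..<i + 1] @ [i + (2 * r + 1) + 1..<?n + 1]"
  have "map ((!) (framed (word_23 a b))) ?l = zw (twos (a + b + 1 - r))"
  proof (rule nth_equalityI)
    show "length (map ((!) (framed (word_23 a b))) ?l) = length (zw (twos (a + b + 1 - r)))"
      using fits assms(1) by (simp del: upt_Suc)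
  next
    fix k assume "k < length (map ((!) (framed (word_23 a b))) ?l)"
    then have k: "k < 2 * (a + b + 1 - r)"
      using fits assms(1) by (simp del: upt_Suc)
    show "map ((!) (framed (word_23 a b))) ?l ! k = zw (twos (a + b + 1 - r)) ! k"
    proof (cases "k < i")
      case True
      then have "map ((!) (framed (word_23 a b))) ?l ! k = framed_letter a (k + 1)"
        using fits framed_word_23_nth[of "k + 1" a b] by (simp add: nth_append del: upt_Suc)
      then show ?thesis
        using True bounds k unfolding zw_twos_eq_map by (simp add: framed_letter_def alternating_letter_def)
    next
      case False
      then have "map ((!) (framed (word_23 a b))) ?l ! k = framed_letter a (k + 2 * r + 2)"
        using k fits assms(1) framed_word_23_nth[of "k + 2 * r + 2" a b]
        by (simp add: nth_append algebra_simps del: upt_Suc)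
      then show ?thesis
        using False bounds k unfolding zw_twos_eq_map by (simp add: framed_letter_def alternating_letter_def)
    qed
  qed
  then show ?thesis
    using gon_right_outside_block[of i "2 * r + 1" "word_23 a b"] fits by (simp add: length_word_23)
qed

lemma block_term_word_23:
  assumes "r \<le> a + b" "i \<le> 2 * a + 2 * b + 2 - 2 * r"
  shows "tens (segment (word_23 a b) (i, i + (2 * r + 1) + 1))
              (dl (gon_right (word_23 a b) (outside_block (length (word_23 a b)) i (2 * r + 1))))
           = tens (block_coeff a r i) (dl (zw (twos (a + b + 1 - r))))"
  using assms segment_word_23[of i r a b] gon_right_word_23_outside_block[of r a b i]
  by (cases "block_coeff a r i = (\<lambda>_. 0)") (auto simp: tens_def length_word_23)

lemma sum_block_coeff_inner_even:
  assumes "r \<le> a + b"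
  shows "(\<Sum>i = 0..2 * a + 2 * b + 2 - 2 * r.
           if even i \<and> i div 2 \<le> a \<and> a < i div 2 + r then dl (word_23 (a - i div 2) (i div 2 + r - a - 1)) x else 0)
       = (\<Sum>(\<alpha>, \<beta>) \<in> {(\<alpha>, \<beta>). \<alpha> \<le> a \<and> \<beta> \<le> b \<and> \<alpha> + \<beta> + 1 = r}. dl (word_23 \<alpha> \<beta>) x)"
  unfolding sum.inter_filter[OF finite_atLeastAtMost, symmetric]
proof (rule sum.reindex_bij_witness[where j = "\<lambda>i. (a - i div 2, i div 2 + r - a - 1)"
                                       and i = "\<lambda>(\<alpha>, \<beta>). 2 * (a - \<alpha>)"])
  fix i assume "i \<in> {i \<in> {0..2 * a + 2 * b + 2 - 2 * r}. even i \<and> i div 2 \<le> a \<and> a < i div 2 + r}"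
  then obtain s where s: "i = 2 * s" "s \<le> a" "a < s + r" "2 * s \<le> 2 * a + 2 * b + 2 - 2 * r"
    by auto
  then show "(case (a - i div 2, i div 2 + r - a - 1) of (\<alpha>, \<beta>) \<Rightarrow> 2 * (a - \<alpha>)) = i"
    by auto
  have "s + r - a - 1 \<le> b"
    using s(3,4) assms by arith
  then show "(a - i div 2, i div 2 + r - a - 1) \<in> {(\<alpha>, \<beta>). \<alpha> \<le> a \<and> \<beta> \<le> b \<and> \<alpha> + \<beta> + 1 = r}"
    using s by simp
  show "(case (a - i div 2, i div 2 + r - a - 1) of (\<alpha>, \<beta>) \<Rightarrow> dl (word_23 \<alpha> \<beta>) x) =
        dl (word_23 (a - i div 2) (i div 2 + r - a - 1)) x"
    by simp
next
  fix p assume "p \<in> {(\<alpha>, \<beta>). \<alpha> \<le> a \<and> \<beta> \<le> b \<and> \<alpha> + \<beta> + 1 = r}"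
  then show "(a - (case p of (\<alpha>, \<beta>) \<Rightarrow> 2 * (a - \<alpha>)) div 2,
              (case p of (\<alpha>, \<beta>) \<Rightarrow> 2 * (a - \<alpha>)) div 2 + r - a - 1) = p"
    "(case p of (\<alpha>, \<beta>) \<Rightarrow> 2 * (a - \<alpha>))
       \<in> {i \<in> {0..2 * a + 2 * b + 2 - 2 * r}. even i \<and> i div 2 \<le> a \<and> a < i div 2 + r}"
    by (auto; presburger)+
qed

lemma sum_block_coeff_inner_odd:
  assumes "r \<le> a + b"
  shows "(\<Sum>i = 0..2 * a + 2 * b + 2 - 2 * r.
           if odd i \<and> i div 2 < a \<and> a \<le> i div 2 + r then dl (word_23 (i div 2 + r - a) (a - i div 2 - 1)) x else 0)
       = (\<Sum>(\<alpha>, \<beta>) \<in> {(\<alpha>, \<beta>). \<alpha> < a \<and> \<beta> \<le> b \<and> \<alpha> + \<beta> + 1 = r}. dl (word_23 \<beta> \<alpha>) x)"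
  unfolding sum.inter_filter[OF finite_atLeastAtMost, symmetric]
proof (rule sum.reindex_bij_witness[where j = "\<lambda>i. (a - i div 2 - 1, i div 2 + r - a)"
                                       and i = "\<lambda>(\<alpha>, \<beta>). 2 * (a - \<alpha> - 1) + 1"])
  fix i assume "i \<in> {i \<in> {0..2 * a + 2 * b + 2 - 2 * r}. odd i \<and> i div 2 < a \<and> a \<le> i div 2 + r}"
  then obtain s where s: "i = 2 * s + 1" "s < a" "a \<le> s + r" "2 * s + 1 \<le> 2 * a + 2 * b + 2 - 2 * r"
    by (auto elim: oddE)
  then show "(case (a - i div 2 - 1, i div 2 + r - a) of (\<alpha>, \<beta>) \<Rightarrow> 2 * (a - \<alpha> - 1) + 1) = i"
    by auto
  have "s + r - a \<le> b"
    using s(3,4) assms by arith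
  then show "(a - i div 2 - 1, i div 2 + r - a) \<in> {(\<alpha>, \<beta>). \<alpha> < a \<and> \<beta> \<le> b \<and> \<alpha> + \<beta> + 1 = r}"
    using s by simp
  show "(case (a - i div 2 - 1, i div 2 + r - a) of (\<alpha>, \<beta>) \<Rightarrow> dl (word_23 \<beta> \<alpha>) x) =
        dl (word_23 (i div 2 + r - a) (a - i div 2 - 1)) x"
    by simp
next
  fix p assume "p \<in> {(\<alpha>, \<beta>). \<alpha> < a \<and> \<beta> \<le> b \<and> \<alpha> + \<beta> + 1 = r}"
  then show "(a - (case p of (\<alpha>, \<beta>) \<Rightarrow> 2 * (a - \<alpha> - 1) + 1) div 2 - 1,
              (case p of (\<alpha>, \<beta>) \<Rightarrow> 2 * (a - \<alpha> - 1) + 1) div 2 + r - a) = p"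
    "(case p of (\<alpha>, \<beta>) \<Rightarrow> 2 * (a - \<alpha> - 1) + 1)
       \<in> {i \<in> {0..2 * a + 2 * b + 2 - 2 * r}. odd i \<and> i div 2 < a \<and> a \<le> i div 2 + r}"
    by (auto; presburger)+
qed

lemma sum_block_coeff:
  assumes "r \<le> a + b"
  shows "(\<Sum>i = 0..2 * a + 2 * b + 2 - 2 * r. block_coeff a r i x) =
     (\<Sum>(\<alpha>, \<beta>) \<in> {(\<alpha>, \<beta>). \<alpha> \<le> a \<and> \<beta> \<le> b \<and> \<alpha> + \<beta> + 1 = r}. dl (word_23 \<alpha> \<beta>) x)
   - (\<Sum>(\<alpha>, \<beta>) \<in> {(\<alpha>, \<beta>). \<alpha> < a \<and> \<beta> \<le> b \<and> \<alpha> + \<beta> + 1 = r}. dl (word_23 \<beta> \<alpha>) x)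
   + ((if a \<ge> r then 1 else 0) - (if b \<ge> r then 1 else 0)) * dl (word_2_x0 r) x"
proof -
  have start_even: "(\<Sum>i = 0..2 * a + 2 * b + 2 - 2 * r. if i = 2 * (a - r) \<and> r \<le> a then y else 0) =
                      (if r \<le> a then y else 0)" for y :: rat
    by (simp add: sum.delta' conj_commute[of "_ = _"] if_distrib) arith
  have start_odd: "(\<Sum>i = 0..2 * a + 2 * b + 2 - 2 * r. if i = 2 * a + 1 then y else 0) =
                     (if r \<le> b then y else 0)" for y :: rat
    using assms by (simp add: sum.delta') arith
  show ?thesis
    unfolding block_coeff_eq sum.distrib sum_subtractf sum_block_coeff_inner_even[OF assms]
      sum_block_coeff_inner_odd[OF assms] start_even start_odd
    by (simp add: algebra_simps)
qed

lemma sum_block_coeff_minus_xi_in_piker: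
  assumes "1 \<le> r" "r \<le> a + b"
  shows "(\<lambda>u. (\<Sum>i = 0..2 * a + 2 * b + 2 - 2 * r. block_coeff a r i u) - xi a b r u) \<in> piker (2 * r + 1)"
proof -
  let ?c = "(if a \<ge> r then 1 else 0) - (if b \<ge> r then 1 else (0::rat))"
  let ?D = "\<lambda>u. ?c * (dl (word_2_x0 r) u - 2 * (\<Sum>i = 1..r. (-1) ^ i * prod_odd_twos i (r - i) u))"
  have "(\<lambda>u. (\<Sum>i = 0..2 * a + 2 * b + 2 - 2 * r. block_coeff a r i u) - xi a b r u) = ?D"
    unfolding sum_block_coeff[OF assms(2)] xi_def prod_odd_twos_def word_23_def
    by (simp add: algebra_simps)
  moreover have "?D \<in> Rid"
    using word_2_x0_in_Rid[OF assms(1)] by (rule Rid_smul)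
  moreover have "homogeneous (2 * r + 1) ?D"
  proof (intro homogeneous_smul homogeneous_diff homogeneous_sum)
    show "homogeneous (2 * r + 1) (dl (word_2_x0 r))"
      using homogeneous_dl[of "word_2_x0 r"] by (simp add: word_2_x0_def)
    fix i assume "i \<in> {1..r}"
    then have "length (zw [2 * i + 1]) + length (zw (twos (r - i))) = 2 * r + 1"
      by (simp add: zw_Cons) arith
    then show "homogeneous (2 * r + 1) (prod_odd_twos i (r - i))"
      unfolding prod_odd_twos_def using homogeneous_shmul[OF homogeneous_dl homogeneous_dl] by metis
  qed
  ultimately show ?thesis
    by (simp add: piker_homogeneous_Rid)
qed

theorem mainTheorem18:
  fixes a b r :: nat
  assumes "1 \<le> r" and "r \<le> a + b"
  shows "eqLZ (2 * r + 1) (gon_red (zw (twos a @ [3] @ twos b)))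
           (tens (xi a b r) (dl (zw (twos (a + b + 1 - r)))))"
proof -
  let ?w = "word_23 a b" and ?Z = "dl (zw (twos (a + b + 1 - r)))"
  let ?B = "\<lambda>x. \<Sum>i = 0..2 * a + 2 * b + 2 - 2 * r. block_coeff a r i x"
  have "(\<lambda>x. gon_red ?w x - (\<Sum>i = 0..2 * a + 2 * b + 2 - 2 * r. tens (block_coeff a r i) ?Z x))
          \<in> tker (2 * r + 1)"
    using gon_red_mod_block_terms[of "2 * r + 1" ?w] assms block_term_word_23[OF assms(2)]
    by (simp add: length_word_23)
  moreover have "tens (\<lambda>u. ?B u - xi a b r u) ?Z \<in> tker (2 * r + 1)"
    using sum_block_coeff_minus_xi_in_piker[OF assms] homogeneous_fsupp[OF homogeneous_dl]
    by (rule tens_in_tker)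
  ultimately have "(\<lambda>x. (gon_red ?w x - (\<Sum>i = 0..2 * a + 2 * b + 2 - 2 * r. tens (block_coeff a r i) ?Z x))
                       + tens (\<lambda>u. ?B u - xi a b r u) ?Z x) \<in> tker (2 * r + 1)"
    by (rule tker_add)
  then show ?thesis
    unfolding eqLZ_def word_23_def[symmetric]
    by (simp add: tens_def split_beta sum_distrib_right left_diff_distrib)
qed

end
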